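(* Let $1\le a<b$ and $m\ge1$ be integers, let $t_a,\dots,t_{b-1}$ be indeterminates, and let $x^{(k)}_1,\dots,x^{(k)}_m$ ($a\le k\le b$) be variables. Let $S^{(k)}_m$ denote the symmetric group permuting $x^{(k)}_1,\dots,x^{(k)}_m$. Then $$\sum_{w\in S^{(a)}_m\times\cdots\times S^{(b-1)}_m}w\left(\prod_{a\le k<b}\prod_{2\le j\le m}\frac{x^{(k)}_1-t_kx^{(k+1)}_j}{x^{(k)}_1-x^{(k)}_j}\right)=\bigl((m-1)!\bigr)^{b-a}.$$
   Context: The group $S^{(a)}_m\times\cdots\times S^{(b-1)}_m$ acts on rational functions by permuting the variables $x^{(k)}_i$ within each family $k\in\{a,\dots,b-1\}$ and fixing the variables $x^{(b)}_j$ and the $t_k$. *)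

theory Defs
  imports "HOL-Library.FuncSet" "HOL-Combinatorics.Permutations"
begin

text \<open>A group element w of S^(a)_m x ... x S^(b-1)_m is a family sigma of permutations
  of {1..m}, indexed by k in {a..<b}.\<close>

definition act_var :: "nat \<Rightarrow> nat \<Rightarrow> (nat \<Rightarrow> nat \<Rightarrow> nat) \<Rightarrow> (nat \<Rightarrow> nat \<Rightarrow> 'a) \<Rightarrow> nat \<Rightarrow> nat \<Rightarrow> 'a" where
  "act_var a b \<sigma> x k i = (if k \<in> {a..<b} then x k (\<sigma> k i) else x k i)"

definition perm_families :: "nat \<Rightarrow> nat \<Rightarrow> nat \<Rightarrow> (nat \<Rightarrow> nat \<Rightarrow> nat) set" where
  "perm_families a b m = ({a..<b} \<rightarrow>\<^sub>E {p. p permutes {1..m}})"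

definition lemma_summand :: "nat \<Rightarrow> nat \<Rightarrow> nat \<Rightarrow> (nat \<Rightarrow> 'a::field) \<Rightarrow> (nat \<Rightarrow> nat \<Rightarrow> 'a) \<Rightarrow> 'a" where
  "lemma_summand a b m t y =
     (\<Prod>k\<in>{a..<b}. \<Prod>j\<in>{2..m}. (y k 1 - t k * y (k+1) j) / (y k 1 - y k j))"

end

theory Submission imports Defs begin

text \<open>Sum first over the permutation of the lowest family \<open>a\<close>, the others being fixed:
  the level-\<open>a\<close> factor then sees the variables of family \<open>a+1\<close> only as constants \<open>c_j\<close>.
  By symmetry this inner sum is \<open>(m-1)!\<close> times
  \<open>\<Sum>_i \<Prod>_{j\<ge>2} (x_i - c_j) / \<Prod>_{l\<noteq>i} (x_i - x_l)\<close>, the leading coefficient of the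
  Lagrange interpolation of the monic degree \<open>m-1\<close> polynomial \<open>\<Prod>_j (X - c_j)\<close> at the
  \<open>m\<close> distinct nodes \<open>x_i\<close>, hence \<open>1\<close>. Peeling off the families one at a time gives
  one factor \<open>(m-1)!\<close> per level.\<close>

definition lagrange_sum :: "(nat \<Rightarrow> 'a::field) \<Rightarrow> (nat \<Rightarrow> 'a) \<Rightarrow> nat set \<Rightarrow> nat set \<Rightarrow> 'a" where
  "lagrange_sum x c I J = (\<Sum>i\<in>I. (\<Prod>j\<in>J. x i - c j) / (\<Prod>l\<in>I-{i}. x i - x l))"

lemma sum_node_factor_remove:
  fixes x :: "nat \<Rightarrow> 'a::field"
  assumes "finite I" "inj_on x I" "i0 \<in> I"
  shows "(\<Sum>i\<in>I. (x i - x i0) * h i / (\<Prod>l\<in>I-{i}. x i - x l))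
       = (\<Sum>i\<in>I-{i0}. h i / (\<Prod>l\<in>I-{i0}-{i}. x i - x l))"
proof -
  have "(\<Sum>i\<in>I. (x i - x i0) * h i / (\<Prod>l\<in>I-{i}. x i - x l))
      = (\<Sum>i\<in>I-{i0}. (x i - x i0) * h i / (\<Prod>l\<in>I-{i}. x i - x l))"
    using assms by (simp add: sum.remove)
  also have "\<dots> = (\<Sum>i\<in>I-{i0}. h i / (\<Prod>l\<in>I-{i0}-{i}. x i - x l))"
  proof (rule sum.cong)
    fix i assume i: "i \<in> I - {i0}"
    have "I - {i} = insert i0 (I - {i0} - {i})" using i assms by auto
    then have "(\<Prod>l\<in>I-{i}. x i - x l) = (x i - x i0) * (\<Prod>l\<in>I-{i0}-{i}. x i - x l)"
      using assms by simp
    moreover have "x i - x i0 \<noteq> 0" using i assms by (auto simp: inj_on_def)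
    ultimately show "(x i - x i0) * h i / (\<Prod>l\<in>I-{i}. x i - x l)
                   = h i / (\<Prod>l\<in>I-{i0}-{i}. x i - x l)"
      by simp
  qed simp
  finally show ?thesis .
qed

text \<open>The two recurrences below come from writing \<open>X - c_j = (X - x_i0) + (x_i0 - c_j)\<close> and
  \<open>1 = ((X - x_i1) - (X - x_i0)) / (x_i0 - x_i1)\<close>; a factor \<open>X - x_i0\<close> cancels node \<open>i0\<close>.\<close>

lemma lagrange_sum_insert:
  fixes x :: "nat \<Rightarrow> 'a::field"
  assumes "finite I" "inj_on x I" "i0 \<in> I" "finite J" "j \<notin> J"
  shows "lagrange_sum x c I (insert j J)
       = lagrange_sum x c (I - {i0}) J + (x i0 - c j) * lagrange_sum x c I J"
proof -
  let ?P = "\<lambda>i. \<Prod>j\<in>J. x i - c j" and ?D = "\<lambda>i. \<Prod>l\<in>I-{i}. x i - x l"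
  have "lagrange_sum x c I (insert j J)
      = (\<Sum>i\<in>I. (x i - x i0) * ?P i / ?D i + (x i0 - c j) * (?P i / ?D i))"
    unfolding lagrange_sum_def using assms(4,5)
    by (intro sum.cong refl) (simp add: add_divide_distrib[symmetric] algebra_simps)
  also have "\<dots> = lagrange_sum x c (I - {i0}) J + (x i0 - c j) * lagrange_sum x c I J"
    unfolding lagrange_sum_def sum.distrib sum_distrib_left[symmetric]
    using sum_node_factor_remove[OF assms(1-3)] by simp
  finally show ?thesis .
qed

lemma lagrange_sum_empty_two_nodes:
  fixes x :: "nat \<Rightarrow> 'a::field"
  assumes "finite I" "inj_on x I" "i0 \<in> I" "i1 \<in> I" "i0 \<noteq> i1"
  shows "lagrange_sum x c I {}
       = (lagrange_sum x c (I - {i1}) {} - lagrange_sum x c (I - {i0}) {}) / (x i0 - x i1)"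
proof -
  let ?D = "\<lambda>i. \<Prod>l\<in>I-{i}. x i - x l"
  have ne: "x i0 - x i1 \<noteq> 0" using assms by (auto simp: inj_on_def)
  have "lagrange_sum x c I {}
      = ((\<Sum>i\<in>I. (x i - x i1) * 1 / ?D i) - (\<Sum>i\<in>I. (x i - x i0) * 1 / ?D i)) / (x i0 - x i1)"
    unfolding lagrange_sum_def sum_subtractf[symmetric] sum_divide_distrib
  proof (intro sum.cong refl)
    fix i
    have "(x i - x i1) * 1 / ?D i - (x i - x i0) * 1 / ?D i = (x i0 - x i1) / ?D i"
      by (simp add: diff_divide_distrib[symmetric])
    then show "(\<Prod>j\<in>{}. x i - c j) / ?D i
             = ((x i - x i1) * 1 / ?D i - (x i - x i0) * 1 / ?D i) / (x i0 - x i1)"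
      using ne by simp
  qed
  then show ?thesis
    unfolding lagrange_sum_def
    using sum_node_factor_remove[OF assms(1,2,3), of "\<lambda>_. 1"]
      sum_node_factor_remove[OF assms(1,2,4), of "\<lambda>_. 1"]
    by simp
qed

lemma lagrange_sum_eq:
  fixes x :: "nat \<Rightarrow> 'a::field"
  assumes "finite I" "inj_on x I" "finite J" "card J < card I"
  shows "lagrange_sum x c I J = (if card J + 1 = card I then 1 else 0)"
  using assms
proof (induction "card I" arbitrary: I J rule: less_induct)
  case less
  note outer_IH = less.hyps and I = less.prems(1,2)
  from \<open>finite J\<close> \<open>card J < card I\<close> show ?case
  proof (induction J rule: finite_induct)
    case empty
    show ?case
    proof (cases "card I = 1")
      case True
      then obtain i where "I = {i}" by (auto simp: card_Suc_eq)
      then show ?thesis by (simp add: lagrange_sum_def)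
    next
      case False
      with empty have "2 \<le> card I" by simp
      then obtain i0 i1 where i: "i0 \<in> I" "i1 \<in> I" "i0 \<noteq> i1"
        by (metis One_nat_def card_le_Suc_iff numeral_2_eq_2 insertCI)
      have "lagrange_sum x c (I - {i}) {} = (if card I = 2 then 1 else 0)" if "i \<in> I" for i
        using outer_IH[of "I - {i}" "{}"] inj_on_subset[OF I(2), of "I - {i}"] that I \<open>2 \<le> card I\<close>
        by (auto simp: card_Diff_singleton)
      then show ?thesis
        using lagrange_sum_empty_two_nodes[OF I i] i False by simp
    qed
  next
    case (insert j J)
    obtain i0 where i0: "i0 \<in> I" using insert.prems by fastforce
    have "lagrange_sum x c (I - {i0}) J = (if card J + 2 = card I then 1 else 0)"
      using outer_IH[of "I - {i0}" J] inj_on_subset[OF I(2), of "I - {i0}"] i0 I insert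
      by (auto simp: card_Diff_singleton)
    moreover have "lagrange_sum x c I J = 0" using insert by simp
    ultimately show ?case
      using lagrange_sum_insert[OF I i0 insert.hyps(1,2)] insert by simp
  qed
qed

text \<open>Every \<open>l \<in> S\<close> plays the role of \<open>s\<close> (compose with the transposition of \<open>s\<close> and \<open>l\<close>),
  so \<open>card S\<close> copies of the left-hand side add up to \<open>card S! \<cdot> \<Sum>\<^sub>i F i\<close>.\<close>

lemma sum_permutes_apply:
  fixes F :: "'b \<Rightarrow> 'a::field_char_0"
  assumes "finite S" "s \<in> S"
  shows "(\<Sum>p | p permutes S. F (p s)) = fact (card S - 1) * (\<Sum>i\<in>S. F i)"
proof -
  let ?Perms = "{p. p permutes S}"
  have swap: "(\<Sum>p\<in>?Perms. F (p s)) = (\<Sum>p\<in>?Perms. F (p l))" if "l \<in> S" for l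
    using sum_permutations_compose_right[OF permutes_swap_id[OF assms(2) that], of "\<lambda>p. F (p s)"]
    by simp
  have "of_nat (card S) * (\<Sum>p\<in>?Perms. F (p s)) = (\<Sum>l\<in>S. \<Sum>p\<in>?Perms. F (p s))"
    by simp
  also have "\<dots> = (\<Sum>l\<in>S. \<Sum>p\<in>?Perms. F (p l))"
    using swap by (rule sum.cong[OF refl])
  also have "\<dots> = (\<Sum>p\<in>?Perms. \<Sum>l\<in>S. F (p l))" by (rule sum.swap)
  also have "\<dots> = (\<Sum>p\<in>?Perms. \<Sum>i\<in>S. F i)"
  proof (rule sum.cong[OF refl])
    fix p assume "p \<in> ?Perms"
    then show "(\<Sum>l\<in>S. F (p l)) = (\<Sum>i\<in>S. F i)"
      using sum.permute[of p S F] by (simp add: comp_def)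
  qed
  also have "\<dots> = of_nat (card S) * (fact (card S - 1) * (\<Sum>i\<in>S. F i))"
    using assms fact_reduce[of "card S"] by (auto simp: card_permutations card_gt_0_iff)
  finally show ?thesis using assms by auto
qed

lemma sum_permutes_lagrange_term:
  fixes x c :: "nat \<Rightarrow> 'a::field_char_0"
  assumes "finite S" "s \<in> S" "inj_on x S"
  shows "(\<Sum>p | p permutes S. \<Prod>j\<in>S-{s}. (x (p s) - c j) / (x (p s) - x (p j)))
       = fact (card S - 1)"
proof -
  define F where "F i = (\<Prod>j\<in>S-{s}. x i - c j) / (\<Prod>l\<in>S-{i}. x i - x l)" for i
  have summand_eq: "(\<Prod>j\<in>S-{s}. (x (p s) - c j) / (x (p s) - x (p j))) = F (p s)"
    if p: "p permutes S" for p
  proof -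
    have "p ` (S - {s}) = S - {p s}"
      using image_set_diff[OF permutes_inj[OF p]] permutes_image[OF p] by simp
    moreover have "(\<Prod>j\<in>S-{s}. x (p s) - x (p j)) = (\<Prod>l\<in>p ` (S - {s}). x (p s) - x l)"
      by (subst prod.reindex) (auto intro: inj_on_subset[OF permutes_inj[OF p]])
    ultimately show ?thesis unfolding F_def prod_dividef by simp
  qed
  have "(\<Sum>i\<in>S. F i) = 1"
    using lagrange_sum_eq[of S x "S - {s}" c] assms card_gt_0_iff[of S]
    unfolding F_def lagrange_sum_def by auto
  then show ?thesis
    using sum_permutes_apply[OF assms(1,2), of F] summand_eq by simp
qed

lemma sum_PiE_insert:
  assumes "i \<notin> S"
  shows "(\<Sum>f\<in>Pi\<^sub>E (insert i S) T. g f) = (\<Sum>y\<in>T i. \<Sum>f\<in>Pi\<^sub>E S T. g (f(i := y)))"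
  unfolding PiE_insert_eq sum.reindex[OF inj_combinator[OF assms]]
  by (simp add: sum.cartesian_product case_prod_unfold)

lemma lemma_summand_act_var_upd:
  assumes "a < b"
  shows "lemma_summand a b m t (act_var a b (\<tau>(a := p)) x)
       = (\<Prod>j\<in>{2..m}. (x a (p 1) - t a * act_var (Suc a) b \<tau> x (Suc a) j) / (x a (p 1) - x a (p j)))
         * lemma_summand (Suc a) b m t (act_var (Suc a) b \<tau> x)"
proof -
  have "{a..<b} = insert a {Suc a..<b}" using assms by auto
  moreover have "act_var a b (\<tau>(a := p)) x k i = act_var (Suc a) b \<tau> x k i" if "Suc a \<le> k" for k i
    using that by (auto simp: act_var_def)
  ultimately show ?thesis
    using assms unfolding lemma_summand_def by (simp add: act_var_def)
qed

lemma sum_lemma_summand: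
  fixes t :: "nat \<Rightarrow> 'a::field_char_0" and x :: "nat \<Rightarrow> nat \<Rightarrow> 'a"
  assumes "a \<le> b" "1 \<le> m" "\<And>k. k \<in> {a..<b} \<Longrightarrow> inj_on (x k) {1..m}"
  shows "(\<Sum>\<sigma>\<in>perm_families a b m. lemma_summand a b m t (act_var a b \<sigma> x))
       = (of_nat (fact (m - 1)) :: 'a) ^ (b - a)"
  using assms(1,3)
proof (induction a rule: inc_induct)
  case base
  then show ?case by (simp add: perm_families_def lemma_summand_def)
next
  case (step a)
  let ?Perms = "{p. p permutes {1..m}}"
  let ?A = "\<lambda>p \<tau>. \<Prod>j\<in>{2..m}.
    (x a (p 1) - t a * act_var (Suc a) b \<tau> x (Suc a) j) / (x a (p 1) - x a (p j))"
  let ?R = "\<lambda>\<tau>. lemma_summand (Suc a) b m t (act_var (Suc a) b \<tau> x)"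
  have "{a..<b} = insert a {Suc a..<b}" using step by auto
  then have "(\<Sum>\<sigma>\<in>perm_families a b m. lemma_summand a b m t (act_var a b \<sigma> x))
      = (\<Sum>p\<in>?Perms. \<Sum>\<tau>\<in>perm_families (Suc a) b m. ?A p \<tau> * ?R \<tau>)"
    unfolding perm_families_def
    by (simp add: sum_PiE_insert lemma_summand_act_var_upd[OF step(2)])
  also have "\<dots> = (\<Sum>\<tau>\<in>perm_families (Suc a) b m. (\<Sum>p\<in>?Perms. ?A p \<tau>) * ?R \<tau>)"
    by (subst sum.swap) (simp add: sum_distrib_right)
  also have "\<dots> = of_nat (fact (m - 1)) * (\<Sum>\<tau>\<in>perm_families (Suc a) b m. ?R \<tau>)"
  proof -
    have "{1..m} - {1} = {2..m}" by auto
    then have "(\<Sum>p\<in>?Perms. ?A p \<tau>) = fact (m - 1)" for \<tau>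
      using sum_permutes_lagrange_term[of "{1..m}" 1 "x a"] step.prems assms(2) step(2) by simp
    then show ?thesis by (simp add: sum_distrib_left)
  qed
  also have "\<dots> = of_nat (fact (m - 1)) ^ (b - a)"
    using step by (simp add: Suc_diff_Suc[symmetric])
  finally show ?case .
qed

theorem lemma5p6:
  fixes a b m :: nat and t :: "nat \<Rightarrow> 'a::field_char_0" and x :: "nat \<Rightarrow> nat \<Rightarrow> 'a"
  assumes "1 \<le> a" and "a < b" and "1 \<le> m"
    and "\<And>k. k \<in> {a..<b} \<Longrightarrow> inj_on (x k) {1..m}"
  shows "(\<Sum>\<sigma>\<in>perm_families a b m. lemma_summand a b m t (act_var a b \<sigma> x))
           = (of_nat (fact (m - 1)) :: 'a) ^ (b - a)"
  \<comment> \<open>the hypothesis \<open>1 \<le> a\<close> is only the paper's indexing convention\<close>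
  using sum_lemma_summand[of a b m x t] assms(2-4) by simp

end
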